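(* Let $\mathcal{M}_1,\dots,\mathcal{M}_k$ be register automata over the alphabet $\Sigma=\{<,=,>\}$, each having the incremental-automaton property, and let $\mathcal{I}=\mathcal{M}_1\cap\dots\cap\mathcal{M}_k$ be their intersection. Let $e,e_0,e_1,\dots,e_k\in\mathbb{Z}$ and let $X=\langle X_1,\dots,X_n\rangle$ be an accepting sequence with respect to $\mathcal{I}$, where $(R_1,\dots,R_k)$ is the vector of values returned by $\mathcal{I}$ after consuming the signature of $X$, and set $v=e+e_0\cdot n+\sum_{i=1}^k e_i\cdot R_i$. Then the weight of $X$ in the invariant digraph $D(\mathcal{I},v)$ is less than or equal to $e+e_0\cdot n+\sum_{i=1}^k e_i\cdot R_i$.
   Context: Signature: for an integer sequence $X=\langle X_1,\dots,X_n\rangle$, its signature is the word $S=\langle S_1,\dots,S_{n-1}\rangle$ over $\Sigma=\{<,=,>\}$ with $S_i$ equal to $<$, $=$ or $>$ according as $X_i<X_{i+1}$, $X_i=X_{i+1}$, $X_i>X_{i+1}$ (the signature has arity $p=2$). Register automaton: a tuple $(Q,\Sigma,\delta,q_0,I,A,\alpha)$ with finite state set $Q$, input alphabet $\Sigma$, a (deterministic, possibly partial) transition function $\delta:(Q\times\mathbb{Z}^r)\times\Sigma\to Q\times\mathbb{Z}^r$ ($r\ge1$ registers), initial state $q_0$, initial register values $I\in\mathbb{Z}^r$, accepting states $A\subseteq Q$, and acceptance function $\alpha:\mathbb{Z}^r\to\mathbb{Z}$. Consuming a word from $(q_0,I)$ triggers a sequence of transitions; if it ends in an accepting state with register values $d$,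 the automaton returns $\alpha(d)$, otherwise it fails. A sequence $X$ is accepting w.r.t. an automaton if the automaton does not fail on the signature of $X$. Incremental-automaton property of an automaton with registers $A_1,\dots,A_r$: (1) every initial value $I_j$ is in $\mathbb{N}$; (2) on every transition $t$, each register is updated as $A_j\leftarrow \alpha^t_{j,0}+\sum_{i=1}^r\alpha^t_{j,i}A_i$ with $\alpha^t_{j,0}\in\mathbb{N}$ and $\alpha^t_{j,i}\in\{0,1\}$; (3) the register $A_r$ (main register) satisfies: (a) the returned value is the final value of $A_r$, (b) $\alpha^t_{r,r}=1$ for every transition $t$, (c) there is a non-empty set $T$ of transitions with $\sum_{i=1}^{r-1}\alpha^t_{r,i}>0$ for all $t\in T$; (4) for every other register $A_j$, $j<r$ (potential registers), on every transition $t$ we have $\sum_{i\ne j}\alpha^t_{j,i}=0$, and if $\alpha^t_{r,j}>0$ then $\alpha^t_{j,j}=0$. Intersection $\mathcal{I}=\mathcal{M}_1\cap\dots\cap\mathcal{M}_k$: the product automaton reading each letter simultaneously in all $\mathcal{M}_i$; its states are tuples of states, its registers are the disjoint union of the registers of the $\mathcal{M}_i$ (not merged), each updated as in its own $\mathcal{M}_i$; a state is accepting iff all components are; it returns $(R_1,\dots,R_k)$ where $R_i$ is the value returned by $\mathcal{M}_i$. For a transition $t$ of $\mathcal{I}$, $\alpha^t_{i,j,0}$ denotes the constant term in the update of the register of $\mathcal{I}$ corresponding to register $j$ of $\mathcal{M}_i$, and $I_{i,j}$ its initial value; $r_i$ is the number of registers of $\mathcal{M}_i$ (register $r_i$ being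 its main register). Invariant digraph $D(\mathcal{I},v)$ for $v=e+e_0n+\sum_i e_iR_i$: nodes are the states of $\mathcal{I}$; each transition $t$ of $\mathcal{I}$ gives an arc with weight $e_0+\sum_{i=1}^k e_i\beta_i^t$, where $\beta_i^t=\alpha^t_{i,r_i,0}$ if $e_i\ge0$ and $\beta_i^t=\sum_{j=1}^{r_i}\alpha^t_{i,j,0}$ if $e_i<0$. Walk and weight of an accepting sequence $X$: the walk of $X$ is the path in $D(\mathcal{I},v)$ formed by the arcs of the transitions triggered when consuming the signature of $X$. The weight of $X$ is the weight of this walk plus the initialisation weight $e+e_0\cdot(p-1)+\sum_{i=1}^k e_i\beta_i^0$ with $p=2$, where $\beta_i^0=I_{i,r_i}$ if $e_i\ge0$ and $\beta_i^0=\sum_{j=1}^{r_i}I_{i,j}$ if $e_i<0$. *)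

theory Defs
  imports Main
begin

datatype sig = Lt | Eq | Gt

definition cmp_sig :: "int \<Rightarrow> int \<Rightarrow> sig" where
  "cmp_sig x y = (if x < y then Lt else if x = y then Eq else Gt)"

definition signature :: "int list \<Rightarrow> sig list" where
  "signature X = map (\<lambda>i. cmp_sig (X ! i) (X ! (i + 1))) [0..<length X - 1]"

text \<open>Registers are indexed 1..nreg; register values are functions nat => int
  (only the entries 1..nreg matter).\<close>

record 'q reg_aut =
  states :: "'q set"
  delta  :: "'q \<Rightarrow> sig \<Rightarrow> 'q option"
  upd    :: "'q \<Rightarrow> sig \<Rightarrow> (nat \<Rightarrow> int) \<Rightarrow> (nat \<Rightarrow> int)"
  q0     :: 'q
  nreg   :: nat
  init   :: "nat \<Rightarrow> int"
  acc    :: "'q set"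
  alpha  :: "(nat \<Rightarrow> int) \<Rightarrow> int"

definition wf_aut :: "'q reg_aut \<Rightarrow> bool" where
  "wf_aut M \<longleftrightarrow> finite (states M) \<and> q0 M \<in> states M \<and> acc M \<subseteq> states M \<and> nreg M \<ge> 1
     \<and> (\<forall>q\<in>states M. \<forall>s q'. delta M q s = Some q' \<longrightarrow> q' \<in> states M)"

definition is_trans :: "'q reg_aut \<Rightarrow> 'q \<Rightarrow> sig \<Rightarrow> bool" where
  "is_trans M q s \<longleftrightarrow> q \<in> states M \<and> delta M q s \<noteq> None"

text \<open>Constant term alpha^t_{j,0} of the (affine) update of register j on transition t=(q,s).\<close>
definition cst :: "'q reg_aut \<Rightarrow> 'q \<Rightarrow> sig \<Rightarrow> nat \<Rightarrow> int" where
  "cst M q s j = upd M q s (\<lambda>_. 0) j"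

text \<open>Incremental-automaton property; a q s j i is the coefficient alpha^t_{j,i}.\<close>
definition incremental :: "'q reg_aut \<Rightarrow> bool" where
  "incremental M \<longleftrightarrow> wf_aut M \<and> (\<exists>a :: 'q \<Rightarrow> sig \<Rightarrow> nat \<Rightarrow> nat \<Rightarrow> int.
     (\<forall>j\<in>{1..nreg M}. init M j \<ge> 0)
   \<and> (\<forall>q s. is_trans M q s \<longrightarrow>
        (\<forall>j\<in>{1..nreg M}. cst M q s j \<ge> 0
           \<and> (\<forall>i\<in>{1..nreg M}. a q s j i \<in> {0, 1})
           \<and> (\<forall>d. upd M q s d j = cst M q s j + (\<Sum>i=1..nreg M. a q s j i * d i))))
   \<and> (\<forall>d. alpha M d = d (nreg M))
   \<and> (\<forall>q s. is_trans M q s \<longrightarrow> a q s (nreg M) (nreg M) = 1)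
   \<and> (\<exists>q s. is_trans M q s \<and> (\<Sum>i=1..nreg M - 1. a q s (nreg M) i) > 0)
   \<and> (\<forall>q s. is_trans M q s \<longrightarrow> (\<forall>j\<in>{1..nreg M - 1}.
        (\<Sum>i\<in>{1..nreg M} - {j}. a q s j i) = 0
      \<and> (a q s (nreg M) j > 0 \<longrightarrow> a q s j j = 0))))"

text \<open>Product states are lists of component states; the product register
  (i,j) is register j of M_(i+1), stored as ds i j.\<close>

definition inter_delta :: "'q reg_aut list \<Rightarrow> 'q list \<Rightarrow> sig \<Rightarrow> 'q list option" where
  "inter_delta Ms qs s =
     (if \<forall>i<length Ms. delta (Ms ! i) (qs ! i) s \<noteq> None
      then Some (map (\<lambda>i. the (delta (Ms ! i) (qs ! i) s)) [0..<length Ms]) else None)"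

definition inter_upd :: "'q reg_aut list \<Rightarrow> 'q list \<Rightarrow> sig \<Rightarrow> (nat \<Rightarrow> nat \<Rightarrow> int) \<Rightarrow> (nat \<Rightarrow> nat \<Rightarrow> int)" where
  "inter_upd Ms qs s ds = (\<lambda>i. if i < length Ms then upd (Ms ! i) (qs ! i) s (ds i) else ds i)"

fun inter_run :: "'q reg_aut list \<Rightarrow> 'q list \<Rightarrow> (nat \<Rightarrow> nat \<Rightarrow> int) \<Rightarrow> sig list
                  \<Rightarrow> ('q list \<times> (nat \<Rightarrow> nat \<Rightarrow> int)) option" where
  "inter_run Ms qs ds [] = Some (qs, ds)"
| "inter_run Ms qs ds (s # w) =
     (case inter_delta Ms qs s of None \<Rightarrow> None
      | Some qs' \<Rightarrow> inter_run Ms qs' (inter_upd Ms qs s ds) w)"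

definition inter_q0 :: "'q reg_aut list \<Rightarrow> 'q list" where
  "inter_q0 Ms = map q0 Ms"

definition inter_init :: "'q reg_aut list \<Rightarrow> nat \<Rightarrow> nat \<Rightarrow> int" where
  "inter_init Ms = (\<lambda>i. init (Ms ! i))"

definition inter_final :: "'q reg_aut list \<Rightarrow> int list \<Rightarrow> ('q list \<times> (nat \<Rightarrow> nat \<Rightarrow> int)) option" where
  "inter_final Ms X = inter_run Ms (inter_q0 Ms) (inter_init Ms) (signature X)"

definition accepting :: "'q reg_aut list \<Rightarrow> int list \<Rightarrow> bool" where
  "accepting Ms X \<longleftrightarrow> (case inter_final Ms X of None \<Rightarrow> False
     | Some (qs, ds) \<Rightarrow> (\<forall>i<length Ms. qs ! i \<in> acc (Ms ! i)))"

definition returned :: "'q reg_aut list \<Rightarrow> int list \<Rightarrow> int list" where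
  "returned Ms X = (case inter_final Ms X of None \<Rightarrow> []
     | Some (qs, ds) \<Rightarrow> map (\<lambda>i. alpha (Ms ! i) (ds i)) [0..<length Ms])"

definition beta :: "'q reg_aut \<Rightarrow> int \<Rightarrow> 'q \<Rightarrow> sig \<Rightarrow> int" where
  "beta M ei q s = (if ei \<ge> 0 then cst M q s (nreg M) else (\<Sum>j=1..nreg M. cst M q s j))"

definition beta0 :: "'q reg_aut \<Rightarrow> int \<Rightarrow> int" where
  "beta0 M ei = (if ei \<ge> 0 then init M (nreg M) else (\<Sum>j=1..nreg M. init M j))"

definition arc_weight :: "'q reg_aut list \<Rightarrow> int \<Rightarrow> int list \<Rightarrow> 'q list \<Rightarrow> sig \<Rightarrow> int" where
  "arc_weight Ms e0 es qs s = e0 + (\<Sum>i<length Ms. es ! i * beta (Ms ! i) (es ! i) (qs ! i) s)"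

fun walk_weight :: "'q reg_aut list \<Rightarrow> int \<Rightarrow> int list \<Rightarrow> 'q list \<Rightarrow> sig list \<Rightarrow> int" where
  "walk_weight Ms e0 es qs [] = 0"
| "walk_weight Ms e0 es qs (s # w) =
     arc_weight Ms e0 es qs s
     + (case inter_delta Ms qs s of None \<Rightarrow> 0 | Some qs' \<Rightarrow> walk_weight Ms e0 es qs' w)"

text \<open>Weight of X (p = 2): walk weight plus initialisation weight.\<close>
definition seq_weight :: "'q reg_aut list \<Rightarrow> int \<Rightarrow> int \<Rightarrow> int list \<Rightarrow> int list \<Rightarrow> int" where
  "seq_weight Ms e e0 es X =
     walk_weight Ms e0 es (inter_q0 Ms) (signature X)
     + (e + e0 * (2 - 1) + (\<Sum>i<length Ms. es ! i * beta0 (Ms ! i) (es ! i)))"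

end

theory Submission
  imports Defs
begin

text \<open>For each automaton pick the potential P(d) = d_r when e_i \<ge> 0 and P(d) = d_1 + ... + d_r
  when e_i < 0, so that beta_i^t and beta_i^0 are the values of P on the constant terms of
  transition t and on the initial registers.  Registers stay nonnegative, the main register
  grows at least by its constant term, and the total of all registers grows by at
  most the total of the constant terms, because every register is consumed by at most one
  update (the main register resets each potential register it absorbs).  Hence e_i P grows by
  at least e_i beta_i^t along every arc, and summing along the walk bounds the weight of X by
  e + e_0 n + sum e_i P(final registers) \<le> e + e_0 n + sum e_i R_i, the last step using
  R_i = d_r \<le> d_1 + ... + d_r.\<close>

lemma incremental_wf: "incremental M \<Longrightarrow> wf_aut M"
  unfolding incremental_def by simp

lemma incremental_nreg_pos: "incremental M \<Longrightarrow> 1 \<le> nreg M"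
  unfolding incremental_def wf_aut_def by simp

lemma incremental_alpha: "incremental M \<Longrightarrow> alpha M d = d (nreg M)"
  unfolding incremental_def by blast

lemma incremental_init_nonneg: "incremental M \<Longrightarrow> j \<in> {1..nreg M} \<Longrightarrow> 0 \<le> init M j"
  unfolding incremental_def by blast

lemma incremental_transE:
  assumes "incremental M" "is_trans M q s"
  obtains a :: "nat \<Rightarrow> nat \<Rightarrow> int" where
    "\<And>j. j \<in> {1..nreg M} \<Longrightarrow> 0 \<le> cst M q s j"
    "\<And>j i. j \<in> {1..nreg M} \<Longrightarrow> i \<in> {1..nreg M} \<Longrightarrow> a j i \<in> {0, 1}"
    "\<And>j d. j \<in> {1..nreg M} \<Longrightarrow> upd M q s d j = cst M q s j + (\<Sum>i=1..nreg M. a j i * d i)"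
    "a (nreg M) (nreg M) = 1"
    "\<And>j. j \<in> {1..nreg M - 1} \<Longrightarrow> (\<Sum>i\<in>{1..nreg M} - {j}. a j i) = 0"
    "\<And>j. j \<in> {1..nreg M - 1} \<Longrightarrow> 0 < a (nreg M) j \<Longrightarrow> a j j = 0"
proof -
  from assms(1) obtain a :: "'a \<Rightarrow> sig \<Rightarrow> nat \<Rightarrow> nat \<Rightarrow> int" where
    "\<forall>q s. is_trans M q s \<longrightarrow>
        (\<forall>j\<in>{1..nreg M}. cst M q s j \<ge> 0
           \<and> (\<forall>i\<in>{1..nreg M}. a q s j i \<in> {0, 1})
           \<and> (\<forall>d. upd M q s d j = cst M q s j + (\<Sum>i=1..nreg M. a q s j i * d i)))"
    "\<forall>q s. is_trans M q s \<longrightarrow> a q s (nreg M) (nreg M) = 1"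
    "\<forall>q s. is_trans M q s \<longrightarrow> (\<forall>j\<in>{1..nreg M - 1}.
        (\<Sum>i\<in>{1..nreg M} - {j}. a q s j i) = 0 \<and> (a q s (nreg M) j > 0 \<longrightarrow> a q s j j = 0))"
    unfolding incremental_def by blast
  with assms(2) show ?thesis
    by (intro that[of "a q s"]) blast+
qed

lemma incremental_column_sum_le_one:
  fixes a :: "nat \<Rightarrow> nat \<Rightarrow> int" and r :: nat
  assumes bin: "\<And>j i. j \<in> {1..r} \<Longrightarrow> i \<in> {1..r} \<Longrightarrow> a j i \<in> {0, 1}"
    and main: "a r r = 1"
    and own: "\<And>j. j \<in> {1..r - 1} \<Longrightarrow> (\<Sum>i\<in>{1..r} - {j}. a j i) = 0"
    and reset: "\<And>j. j \<in> {1..r - 1} \<Longrightarrow> 0 < a r j \<Longrightarrow> a j j = 0"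
    and i: "i \<in> {1..r}"
  shows "(\<Sum>j=1..r. a j i) \<le> 1"
proof -
  have other_rows: "a j i = 0" if j: "j \<in> {1..r}" "j \<noteq> i" "j \<noteq> r" for j
  proof -
    have "j \<in> {1..r - 1}" using j by auto
    then have "(\<Sum>i\<in>{1..r} - {j}. a j i) = 0" by (rule own)
    moreover have "\<forall>i'\<in>{1..r} - {j}. 0 \<le> a j i'" using bin j by fastforce
    ultimately show ?thesis
      using sum_nonneg_eq_0_iff[of "{1..r} - {j}" "a j"] i j by auto
  qed
  have "(\<Sum>j=1..r. a j i) = (\<Sum>j\<in>{i, r}. a j i)"
    using i other_rows by (intro sum.mono_neutral_right) auto
  also have "\<dots> \<le> 1"
  proof (cases "i = r")
    case False
    then have "i \<in> {1..r - 1}" using i by auto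
    then show ?thesis using False bin[OF i i] bin[of r i] reset i by auto
  qed (simp add: main)
  finally show ?thesis .
qed

lemma sum_matrix_mult_le_sum:
  fixes a :: "nat \<Rightarrow> nat \<Rightarrow> int"
  assumes "\<And>i. i \<in> A \<Longrightarrow> (\<Sum>j\<in>A. a j i) \<le> 1" "\<And>i. i \<in> A \<Longrightarrow> 0 \<le> d i"
  shows "(\<Sum>j\<in>A. \<Sum>i\<in>A. a j i * d i) \<le> (\<Sum>i\<in>A. d i)"
proof -
  have "(\<Sum>j\<in>A. \<Sum>i\<in>A. a j i * d i) = (\<Sum>i\<in>A. (\<Sum>j\<in>A. a j i) * d i)"
    by (subst sum.swap) (simp add: sum_distrib_right)
  also have "\<dots> \<le> (\<Sum>i\<in>A. d i)"
    using assms mult_right_mono[of _ 1] by (intro sum_mono) fastforce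
  finally show ?thesis .
qed

context
  fixes M :: "'q reg_aut" and q :: 'q and s :: sig and d :: "nat \<Rightarrow> int"
  assumes inc: "incremental M" and trans: "is_trans M q s"
    and nonneg: "\<And>j. j \<in> {1..nreg M} \<Longrightarrow> 0 \<le> d j"
begin

lemma incremental_upd_nonneg: "j \<in> {1..nreg M} \<Longrightarrow> 0 \<le> upd M q s d j"
  by (rule incremental_transE[OF inc trans])
     (fastforce intro!: add_nonneg_nonneg sum_nonneg simp: nonneg)

lemma incremental_upd_main_ge: "cst M q s (nreg M) + d (nreg M) \<le> upd M q s d (nreg M)"
proof (rule incremental_transE[OF inc trans])
  fix a :: "nat \<Rightarrow> nat \<Rightarrow> int"
  let ?r = "nreg M"
  assume bin: "\<And>j i. j \<in> {1..?r} \<Longrightarrow> i \<in> {1..?r} \<Longrightarrow> a j i \<in> {0, 1}"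
    and upd: "\<And>j d. j \<in> {1..?r} \<Longrightarrow> upd M q s d j = cst M q s j + (\<Sum>i=1..?r. a j i * d i)"
    and main: "a ?r ?r = 1"
  have r: "?r \<in> {1..?r}" using incremental_nreg_pos[OF inc] by simp
  have "(\<Sum>i=1..?r. a ?r i * d i) = a ?r ?r * d ?r + (\<Sum>i\<in>{1..?r} - {?r}. a ?r i * d i)"
    using sum.remove[OF _ r] by simp
  moreover have "0 \<le> (\<Sum>i\<in>{1..?r} - {?r}. a ?r i * d i)"
    using bin[OF r] nonneg by (fastforce intro: sum_nonneg)
  ultimately show ?thesis using upd[OF r] main by simp
qed

lemma incremental_upd_sum_le:
  "(\<Sum>j=1..nreg M. upd M q s d j) \<le> (\<Sum>j=1..nreg M. cst M q s j) + (\<Sum>j=1..nreg M. d j)"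
proof (rule incremental_transE[OF inc trans])
  fix a :: "nat \<Rightarrow> nat \<Rightarrow> int"
  let ?r = "nreg M"
  assume bin: "\<And>j i. j \<in> {1..?r} \<Longrightarrow> i \<in> {1..?r} \<Longrightarrow> a j i \<in> {0, 1}"
    and upd: "\<And>j d. j \<in> {1..?r} \<Longrightarrow> upd M q s d j = cst M q s j + (\<Sum>i=1..?r. a j i * d i)"
    and main: "a ?r ?r = 1"
    and own: "\<And>j. j \<in> {1..?r - 1} \<Longrightarrow> (\<Sum>i\<in>{1..?r} - {j}. a j i) = 0"
    and reset: "\<And>j. j \<in> {1..?r - 1} \<Longrightarrow> 0 < a ?r j \<Longrightarrow> a j j = 0"
  have "(\<Sum>j=1..?r. upd M q s d j) = (\<Sum>j=1..?r. cst M q s j) + (\<Sum>j=1..?r. \<Sum>i=1..?r. a j i * d i)"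
    by (simp add: upd sum.distrib)
  also have "(\<Sum>j=1..?r. \<Sum>i=1..?r. a j i * d i) \<le> (\<Sum>i=1..?r. d i)"
    using incremental_column_sum_le_one[OF bin main own reset] nonneg
    by (intro sum_matrix_mult_le_sum) auto
  finally show ?thesis by simp
qed

end

definition potential :: "'q reg_aut \<Rightarrow> int \<Rightarrow> (nat \<Rightarrow> int) \<Rightarrow> int" where
  "potential M ei d = (if ei \<ge> 0 then d (nreg M) else (\<Sum>j=1..nreg M. d j))"

lemma beta0_eq_potential: "beta0 M ei = potential M ei (init M)"
  unfolding beta0_def potential_def by simp

lemma potential_step:
  assumes "incremental M" "is_trans M q s" "\<And>j. j \<in> {1..nreg M} \<Longrightarrow> 0 \<le> d j"
  shows "ei * beta M ei q s + ei * potential M ei d \<le> ei * potential M ei (upd M q s d)"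
proof (cases "ei \<ge> 0")
  case True
  then show ?thesis
    using mult_left_mono[OF incremental_upd_main_ge[OF assms] True]
    by (simp add: beta_def potential_def algebra_simps)
next
  case False
  then show ?thesis
    using mult_left_mono_neg[OF incremental_upd_sum_le[OF assms], where c = ei]
    by (simp add: beta_def potential_def algebra_simps)
qed

lemma potential_le_alpha:
  assumes "incremental M" "\<And>j. j \<in> {1..nreg M} \<Longrightarrow> 0 \<le> d j"
  shows "ei * potential M ei d \<le> ei * alpha M d"
proof (cases "ei \<ge> 0")
  case False
  have "d (nreg M) \<le> (\<Sum>j=1..nreg M. d j)"
    using assms incremental_nreg_pos[OF assms(1)] by (intro member_le_sum) auto
  then show ?thesis
    using False mult_left_mono_neg[where c = ei] by (simp add: potential_def incremental_alpha[OF assms(1)])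
qed (simp add: potential_def incremental_alpha[OF assms(1)])

definition valid_config :: "'q reg_aut list \<Rightarrow> 'q list \<Rightarrow> (nat \<Rightarrow> nat \<Rightarrow> int) \<Rightarrow> bool" where
  "valid_config Ms qs ds \<longleftrightarrow> length qs = length Ms \<and> (\<forall>i<length Ms. qs ! i \<in> states (Ms ! i)
      \<and> (\<forall>j\<in>{1..nreg (Ms ! i)}. 0 \<le> ds i j))"

definition total_potential :: "'q reg_aut list \<Rightarrow> int list \<Rightarrow> (nat \<Rightarrow> nat \<Rightarrow> int) \<Rightarrow> int" where
  "total_potential Ms es ds = (\<Sum>i<length Ms. es ! i * potential (Ms ! i) (es ! i) (ds i))"

lemma valid_config_initial:
  "\<forall>M\<in>set Ms. incremental M \<Longrightarrow> valid_config Ms (inter_q0 Ms) (inter_init Ms)"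
  using incremental_wf incremental_init_nonneg
  unfolding valid_config_def inter_q0_def inter_init_def wf_aut_def by fastforce

lemma inter_delta_SomeD:
  assumes "inter_delta Ms qs s = Some qs'" "valid_config Ms qs ds" "i < length Ms"
  shows "is_trans (Ms ! i) (qs ! i) s"
    and "qs' ! i = the (delta (Ms ! i) (qs ! i) s)"
  using assms unfolding inter_delta_def valid_config_def is_trans_def
  by (auto split: if_splits)

lemma valid_config_step:
  assumes "\<forall>M\<in>set Ms. incremental M" "inter_delta Ms qs s = Some qs'" "valid_config Ms qs ds"
  shows "valid_config Ms qs' (inter_upd Ms qs s ds)"
  unfolding valid_config_def
proof (intro conjI allI impI)
  show "length qs' = length Ms"
    using assms(2) unfolding inter_delta_def by (auto split: if_splits)
next
  fix i assume i: "i < length Ms"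
  have inc: "incremental (Ms ! i)" using assms(1) i by simp
  have trans: "is_trans (Ms ! i) (qs ! i) s" and qs': "qs' ! i = the (delta (Ms ! i) (qs ! i) s)"
    using inter_delta_SomeD[OF assms(2,3) i] .
  show "qs' ! i \<in> states (Ms ! i)"
    using incremental_wf[OF inc] trans qs' unfolding wf_aut_def is_trans_def by auto
  show "\<forall>j\<in>{1..nreg (Ms ! i)}. 0 \<le> inter_upd Ms qs s ds i j"
    using incremental_upd_nonneg[OF inc trans] assms(3) i
    unfolding inter_upd_def valid_config_def by auto
qed

lemma inter_run_valid_config:
  "\<forall>M\<in>set Ms. incremental M \<Longrightarrow> valid_config Ms qs ds \<Longrightarrow> inter_run Ms qs ds w = Some (qf, df)
    \<Longrightarrow> valid_config Ms qf df"
  by (induction w arbitrary: qs ds) (auto split: option.splits, metis valid_config_step)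

lemma walk_weight_le_potential_gain:
  assumes "\<forall>M\<in>set Ms. incremental M"
  shows "valid_config Ms qs ds \<Longrightarrow> inter_run Ms qs ds w = Some (qf, df) \<Longrightarrow>
    walk_weight Ms e0 es qs w + total_potential Ms es ds \<le> e0 * int (length w) + total_potential Ms es df"
proof (induction w arbitrary: qs ds)
  case (Cons s w)
  obtain qs' where delta: "inter_delta Ms qs s = Some qs'"
    using Cons.prems(2) by (cases "inter_delta Ms qs s") auto
  let ?ds' = "inter_upd Ms qs s ds"
  have run: "inter_run Ms qs' ?ds' w = Some (qf, df)"
    using Cons.prems(2) delta by simp
  have arc: "arc_weight Ms e0 es qs s + total_potential Ms es ds \<le> e0 + total_potential Ms es ?ds'"
    unfolding arc_weight_def total_potential_def add.assoc sum.distrib[symmetric]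
    using assms Cons.prems(1) inter_delta_SomeD(1)[OF delta Cons.prems(1)]
    by (auto intro!: sum_mono potential_step simp: inter_upd_def valid_config_def)
  have "walk_weight Ms e0 es qs' w + total_potential Ms es ?ds'
      \<le> e0 * int (length w) + total_potential Ms es df"
    using Cons.IH[OF valid_config_step[OF assms delta Cons.prems(1)] run] .
  with arc delta show ?case by (simp add: algebra_simps)
qed simp

theorem theorem1:
  fixes Ms :: "'q reg_aut list" and e e0 :: int and es :: "int list" and X :: "int list"
  assumes "\<forall>M\<in>set Ms. incremental M"
    and "length es = length Ms"
    and "length X \<ge> 1"
    and "accepting Ms X"
  shows "seq_weight Ms e e0 es X
           \<le> e + e0 * int (length X) + (\<Sum>i<length Ms. es ! i * returned Ms X ! i)"
proof -
  obtain qf df where run: "inter_run Ms (inter_q0 Ms) (inter_init Ms) (signature X) = Some (qf, df)"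
    using assms(4) unfolding accepting_def inter_final_def by (auto split: option.splits)
  note init = valid_config_initial[OF assms(1)]
  have walk: "walk_weight Ms e0 es (inter_q0 Ms) (signature X) + total_potential Ms es (inter_init Ms)
      \<le> e0 * int (length X - 1) + total_potential Ms es df"
    using walk_weight_le_potential_gain[OF assms(1) init run] by (simp add: signature_def)
  have "total_potential Ms es df \<le> (\<Sum>i<length Ms. es ! i * returned Ms X ! i)"
    unfolding total_potential_def returned_def inter_final_def run
    using assms(1) inter_run_valid_config[OF assms(1) init run]
    by (auto intro!: sum_mono potential_le_alpha simp: valid_config_def)
  moreover have "e0 * int (length X - 1) + e0 = e0 * int (length X)"
    using assms(3) by (simp add: of_nat_diff algebra_simps)
  ultimately show ?thesis
    using walk unfolding seq_weight_def total_potential_def inter_init_def beta0_eq_potential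
    by simp
qed

end
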